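(* Let $L:\mathcal{R}\to\mathbb{R}^{\mathcal{Y}}_+$ be a loss with a finite representative set $\mathcal{R}'$. Then $\mathcal{R}'$ is a minimum representative set for $L$ if and only if $L|_{\mathcal{R}'}$ is non-redundant.
   Context: $\mathcal{Y}$ is a finite label set, $\Delta_{\mathcal{Y}}$ the simplex, $\mathbb{R}^{\mathcal{Y}}_+$ the nonnegative orthant. A loss $L:\mathcal{R}\to\mathbb{R}^{\mathcal{Y}}_+$ is minimizable if $\inf_r\langle p,L(r)\rangle$ is attained for every $p$; it then elicits $\Gamma=\mathrm{prop}[L]$, $\Gamma(p)=\arg\min_r\langle p,L(r)\rangle$, with level sets $\Gamma_r=\{p:r\in\Gamma(p)\}$. $\mathcal{S}$ is representative for $L$ if $\Gamma(p)\cap\mathcal{S}\neq\emptyset$ for all $p$; minimum representative if it has smallest cardinality among representative sets. $L|_{\mathcal{R}'}$ is the restriction of $L$ to $\mathcal{R}'$. A minimizable loss with report set $\mathcal{R}''$ eliciting $\Gamma$ is redundant if there are $r\neq r'$ in $\mathcal{R}''$ with $\Gamma_r\subseteq\Gamma_{r'}$, and non-redundant otherwise. *)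

theory Defs
  imports Complex_Main "HOL-Library.Equipollence"
begin

definition simplex :: "('y::finite \<Rightarrow> real) set" where
  "simplex = {p. (\<forall>y. 0 \<le> p y) \<and> (\<Sum>y\<in>UNIV. p y) = 1}"

definition exp_loss :: "('r \<Rightarrow> 'y::finite \<Rightarrow> real) \<Rightarrow> ('y \<Rightarrow> real) \<Rightarrow> 'r \<Rightarrow> real" where
  "exp_loss L p r = (\<Sum>y\<in>UNIV. p y * L r y)"

definition prop_on :: "('r \<Rightarrow> 'y::finite \<Rightarrow> real) \<Rightarrow> 'r set \<Rightarrow> ('y \<Rightarrow> real) \<Rightarrow> 'r set" where
  "prop_on L R p = {r \<in> R. \<forall>r'\<in>R. exp_loss L p r \<le> exp_loss L p r'}"

definition minimizable_on :: "('r \<Rightarrow> 'y::finite \<Rightarrow> real) \<Rightarrow> 'r set \<Rightarrow> bool" where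
  "minimizable_on L R \<longleftrightarrow> (\<forall>p\<in>simplex. prop_on L R p \<noteq> {})"

definition level_set :: "('r \<Rightarrow> 'y::finite \<Rightarrow> real) \<Rightarrow> 'r set \<Rightarrow> 'r \<Rightarrow> ('y \<Rightarrow> real) set" where
  "level_set L R r = {p \<in> simplex. r \<in> prop_on L R p}"

definition representative :: "('r \<Rightarrow> 'y::finite \<Rightarrow> real) \<Rightarrow> 'r set \<Rightarrow> bool" where
  "representative L S \<longleftrightarrow> (\<forall>p\<in>simplex. prop_on L UNIV p \<inter> S \<noteq> {})"

definition min_representative :: "('r \<Rightarrow> 'y::finite \<Rightarrow> real) \<Rightarrow> 'r set \<Rightarrow> bool" where
  "min_representative L S \<longleftrightarrow> representative L S \<and> (\<forall>T. representative L T \<longrightarrow> S \<lesssim> T)"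

definition redundant_on :: "('r \<Rightarrow> 'y::finite \<Rightarrow> real) \<Rightarrow> 'r set \<Rightarrow> bool" where
  "redundant_on L R \<longleftrightarrow>
     (\<exists>r\<in>R. \<exists>r'\<in>R. r \<noteq> r' \<and> level_set L R r \<subseteq> level_set L R r')"

definition non_redundant_on :: "('r \<Rightarrow> 'y::finite \<Rightarrow> real) \<Rightarrow> 'r set \<Rightarrow> bool" where
  "non_redundant_on L R \<longleftrightarrow> minimizable_on L R \<and> \<not> redundant_on L R"

end

theory Submission
  imports Defs
begin

text \<open>On the simplex, the level set of a report t is convex, and for every other report s the
  function p \<mapsto> E_p s - E_p t is affine and nonnegative on it. Hence if finitely many reports
  cover the level set of t, averaging one bad distribution for each of them shows that a single
  report covers it. Non-redundancy of S makes every r in S the unique optimal report of S at some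
  distribution p_r; picking for each r an optimal t_r in another representative set T gives an
  injection, since a report of S covering the level set of t_r = t_r' is optimal at p_r and p_r',
  hence equal to both r and r'. Conversely, a redundant report can be dropped from S.\<close>

lemma uniform_in_simplex: "(\<lambda>_::'y::finite. 1 / real (card (UNIV :: 'y set))) \<in> simplex"
  by (simp add: simplex_def)

lemma exp_loss_average:
  "exp_loss L (\<lambda>y. (\<Sum>s\<in>F. P s y) / n) r = (\<Sum>s\<in>F. exp_loss L (P s) r) / n"
  unfolding exp_loss_def
  by (simp add: sum_divide_distrib sum_distrib_right sum.swap[of _ UNIV F])

lemma average_in_simplex:
  assumes "finite F" "F \<noteq> {}" "\<And>s. s \<in> F \<Longrightarrow> P s \<in> simplex"
  shows "(\<lambda>y. (\<Sum>s\<in>F. P s y) / card F) \<in> simplex"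
proof -
  have "(\<Sum>y\<in>UNIV. (\<Sum>s\<in>F. P s y) / card F) = (\<Sum>s\<in>F. \<Sum>y\<in>UNIV. P s y) / card F"
    by (simp add: sum_divide_distrib sum.swap[of _ UNIV F])
  also have "\<dots> = 1"
    using assms by (simp add: simplex_def)
  finally show ?thesis
    using assms by (auto simp: simplex_def intro!: divide_nonneg_nonneg sum_nonneg)
qed

lemma average_in_level_set:
  assumes "finite F" "F \<noteq> {}" "\<And>s. s \<in> F \<Longrightarrow> P s \<in> level_set L R t"
  shows "(\<lambda>y. (\<Sum>s\<in>F. P s y) / card F) \<in> level_set L R t"
proof -
  have "t \<in> R"
    using assms(2,3) by (auto simp: level_set_def prop_on_def)
  moreover have "exp_loss L (\<lambda>y. (\<Sum>s\<in>F. P s y) / card F) t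
      \<le> exp_loss L (\<lambda>y. (\<Sum>s\<in>F. P s y) / card F) r" if "r \<in> R" for r
    unfolding exp_loss_average using assms that
    by (auto simp: level_set_def prop_on_def intro!: divide_right_mono sum_mono)
  moreover have "(\<lambda>y. (\<Sum>s\<in>F. P s y) / card F) \<in> simplex"
    using assms by (intro average_in_simplex) (auto simp: level_set_def)
  ultimately show ?thesis
    by (simp add: level_set_def prop_on_def)
qed

lemma level_set_covered_by_single:
  assumes fin: "finite F" and ne: "F \<noteq> {}"
    and cover: "\<And>p. p \<in> level_set L R t \<Longrightarrow> prop_on L R p \<inter> F \<noteq> {}"
  shows "\<exists>s\<in>F. level_set L R t \<subseteq> level_set L R s"
proof (rule ccontr)
  assume "\<not> ?thesis"
  then have "\<forall>s\<in>F. \<exists>p. p \<in> level_set L R t \<and> s \<notin> prop_on L R p"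
    by (auto simp: level_set_def)
  then obtain P where P: "\<And>s. s \<in> F \<Longrightarrow> P s \<in> level_set L R t \<and> s \<notin> prop_on L R (P s)"
    by metis
  define q where "q = (\<lambda>y. (\<Sum>s\<in>F. P s y) / card F)"
  have "q \<in> level_set L R t"
    unfolding q_def using fin ne P by (intro average_in_level_set) auto
  then obtain s where s: "s \<in> F" "s \<in> prop_on L R q"
    using cover by blast
  have "t \<in> R" "s \<in> R"
    using \<open>q \<in> level_set L R t\<close> s(2) by (simp_all add: level_set_def prop_on_def)
  have t_opt: "exp_loss L (P s') t \<le> exp_loss L (P s') r" if "s' \<in> F" "r \<in> R" for s' r
    using P[OF that(1)] that(2) by (auto simp: level_set_def prop_on_def)
  have "exp_loss L (P s) t < exp_loss L (P s) s"
  proof -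
    obtain r where "r \<in> R" "exp_loss L (P s) r < exp_loss L (P s) s"
      using P[OF s(1)] \<open>s \<in> R\<close> by (auto simp: prop_on_def not_le)
    then show ?thesis
      using t_opt[OF s(1)] by fastforce
  qed
  then have "(\<Sum>s'\<in>F. exp_loss L (P s') t) < (\<Sum>s'\<in>F. exp_loss L (P s') s)"
    using fin s(1) t_opt \<open>s \<in> R\<close> by (intro sum_strict_mono_ex1) auto
  then have "exp_loss L q t < exp_loss L q s"
    unfolding q_def exp_loss_average using fin ne
    by (intro divide_strict_right_mono) (simp_all add: card_gt_0_iff)
  moreover have "exp_loss L q s \<le> exp_loss L q t"
    using s(2) \<open>t \<in> R\<close> by (simp add: prop_on_def)
  ultimately show False
    by simp
qed

lemma prop_on_representative:
  assumes rep: "representative L S" and p: "p \<in> simplex"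
  shows "prop_on L S p = prop_on L UNIV p \<inter> S"
proof
  obtain r0 where r0: "r0 \<in> prop_on L UNIV p" "r0 \<in> S"
    using rep p unfolding representative_def by blast
  show "prop_on L S p \<subseteq> prop_on L UNIV p \<inter> S"
    using r0 by (auto simp: prop_on_def intro: order_trans)
qed (auto simp: prop_on_def)

lemma level_set_representative:
  assumes "representative L S" "r \<in> S"
  shows "level_set L S r = level_set L UNIV r"
  using prop_on_representative[OF assms(1)] assms(2) unfolding level_set_def by auto

lemma minimizable_on_representative:
  assumes "representative L S"
  shows "minimizable_on L S"
  using assms prop_on_representative[OF assms]
  unfolding minimizable_on_def representative_def by auto

lemma representative_Diff_redundant:
  fixes L :: "'r \<Rightarrow> 'y::finite \<Rightarrow> real"
  assumes rep: "representative L S" and "r \<in> S" "r' \<in> S" "r \<noteq> r'"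
    and sub: "level_set L S r \<subseteq> level_set L S r'"
  shows "representative L (S - {r})"
  unfolding representative_def
proof
  fix p :: "'y \<Rightarrow> real"
  assume p: "p \<in> simplex"
  obtain x where x: "x \<in> prop_on L UNIV p" "x \<in> S"
    using rep p unfolding representative_def by blast
  show "prop_on L UNIV p \<inter> (S - {r}) \<noteq> {}"
  proof (cases "x = r")
    case True
    then have "p \<in> level_set L UNIV r"
      using x p by (simp add: level_set_def)
    then have "p \<in> level_set L UNIV r'"
      using sub level_set_representative[OF rep] assms(2,3) by auto
    then show ?thesis
      using assms(3,4) by (auto simp: level_set_def)
  qed (use x in blast)
qed

lemma min_representative_not_redundant:
  assumes min: "min_representative L S" and fin: "finite S"
  shows "\<not> redundant_on L S"
proof
  assume "redundant_on L S"
  then obtain r r' where "r \<in> S" "r' \<in> S" "r \<noteq> r'" "level_set L S r \<subseteq> level_set L S r'"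
    unfolding redundant_on_def by blast
  then have "representative L (S - {r})"
    using min unfolding min_representative_def by (blast intro: representative_Diff_redundant)
  then have "S \<lesssim> S - {r}"
    using min unfolding min_representative_def by blast
  then have "card S \<le> card (S - {r})"
    using fin by (simp only: lepoll_iff_card_le finite_Diff)
  then show False
    using card_Diff1_less[OF fin \<open>r \<in> S\<close>] by simp
qed

lemma non_redundant_exclusive_report:
  assumes fin: "finite S" and nred: "\<not> redundant_on L S" and r: "r \<in> S"
  shows "\<exists>p\<in>simplex. prop_on L S p = {r}"
proof (cases "S = {r}")
  case True
  then show ?thesis
    using uniform_in_simplex by (auto simp: prop_on_def)
next
  case False
  show ?thesis
  proof (rule ccontr)
    assume no_excl: "\<not> ?thesis"
    have "prop_on L S p \<inter> (S - {r}) \<noteq> {}" if "p \<in> level_set L S r" for p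
      using that no_excl by (auto simp: level_set_def prop_on_def)
    then obtain s where "s \<in> S - {r}" "level_set L S r \<subseteq> level_set L S s"
      using level_set_covered_by_single[of "S - {r}"] fin r False by blast
    then have "redundant_on L S"
      using r unfolding redundant_on_def by (metis Diff_iff insertI1)
    then show False
      using nred by blast
  qed
qed

lemma representative_lepoll_if_exclusive:
  assumes rep: "representative L S" and fin: "finite S"
    and excl: "\<And>r. r \<in> S \<Longrightarrow> \<exists>p\<in>simplex. prop_on L S p = {r}"
    and repT: "representative L T"
  shows "S \<lesssim> T"
proof -
  obtain P where P: "\<And>r. r \<in> S \<Longrightarrow> P r \<in> simplex \<and> prop_on L S (P r) = {r}"
    using excl by metis
  have "\<forall>r\<in>S. \<exists>t. t \<in> prop_on L UNIV (P r) \<inter> T"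
    using repT P unfolding representative_def by blast
  then obtain f where f: "\<And>r. r \<in> S \<Longrightarrow> f r \<in> prop_on L UNIV (P r) \<inter> T"
    by metis
  have "inj_on f S"
  proof
    fix r r' assume rs: "r \<in> S" "r' \<in> S" and eq: "f r = f r'"
    have "prop_on L UNIV p \<inter> S \<noteq> {}" if "p \<in> level_set L UNIV (f r)" for p
      using rep that unfolding representative_def level_set_def by blast
    then obtain s where s: "s \<in> S" "level_set L UNIV (f r) \<subseteq> level_set L UNIV s"
      using level_set_covered_by_single[of S] fin rs(1) by blast
    have "s = q" if "q \<in> S" "f q = f r" for q
    proof -
      have "P q \<in> level_set L UNIV (f r)"
        using f[OF that(1)] P[OF that(1)] that(2) by (auto simp: level_set_def)
      then have "s \<in> prop_on L UNIV (P q) \<inter> S"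
        using s by (auto simp: level_set_def)
      then show ?thesis
        using P prop_on_representative[OF rep] that(1) by auto
    qed
    then show "r = r'"
      using rs eq by metis
  qed
  then show ?thesis
    using f unfolding lepoll_def by blast
qed

theorem proposition4:
  fixes L :: "'r \<Rightarrow> 'y::finite \<Rightarrow> real" and S :: "'r set"
  assumes nonneg: "\<And>r y. 0 \<le> L r y"
    and fin: "finite S"
    and rep: "representative L S"
  shows "min_representative L S \<longleftrightarrow> non_redundant_on L S"
proof
  assume "min_representative L S"
  then have "\<not> redundant_on L S"
    using fin by (rule min_representative_not_redundant)
  then show "non_redundant_on L S"
    using minimizable_on_representative[OF rep] unfolding non_redundant_on_def by simp
next
  assume "non_redundant_on L S"
  then have "\<not> redundant_on L S"
    unfolding non_redundant_on_def by simp
  then have "\<exists>p\<in>simplex. prop_on L S p = {r}" if "r \<in> S" for r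
    using that by (rule non_redundant_exclusive_report[OF fin])
  then have "S \<lesssim> T" if "representative L T" for T
    using representative_lepoll_if_exclusive[OF rep fin _ that] by simp
  then show "min_representative L S"
    using rep unfolding min_representative_def by simp
qed

end
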